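(* Let $\ell$ be an odd prime. For any real number $M$, there are at most $2\ell M$ primes $p\in\mathbb{P}$ with $R_\ell(p)\le M$.
   Context: $\Phi_\ell(X)$ denotes the $\ell$-th cyclotomic polynomial. For a natural number $n$, $R_\ell(n):=\min\{d\in\mathbb{N}: n\mid \Phi_\ell(d)\}$ if such $d$ exists, and $R_\ell(n)=\infty$ otherwise. $\mathbb{P}$ denotes the set of primes $p$ that divide $\Phi_\ell(d)$ for some $d\in\mathbb{N}$. *)

theory Defs
  imports "HOL-Analysis.Analysis" "HOL-Computational_Algebra.Polynomial" "HOL-Library.Extended_Nat"
begin

definition cyclotomic :: "nat \<Rightarrow> complex poly" where
  "cyclotomic n = (\<Prod>k\<in>{k. 1 \<le> k \<and> k \<le> n \<and> coprime k n}.
      [:- cis (2 * pi * real k / real n), 1:])"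

definition dvd_cyclo :: "nat \<Rightarrow> nat \<Rightarrow> nat \<Rightarrow> bool" where
  "dvd_cyclo n l d \<longleftrightarrow> (\<exists>m::int. poly (cyclotomic l) (of_nat d) = of_int (int n * m))"

definition R :: "nat \<Rightarrow> nat \<Rightarrow> enat" where
  "R l n = (if \<exists>d. d \<ge> 1 \<and> dvd_cyclo n l d
            then enat (LEAST d. d \<ge> 1 \<and> dvd_cyclo n l d) else \<infinity>)"

definition Pset :: "nat \<Rightarrow> nat set" where
  "Pset l = {p. prime p \<and> (\<exists>d. d \<ge> 1 \<and> dvd_cyclo p l d)}"

end

theory Submission
  imports Defs
begin

text \<open>For prime \<open>l\<close> we have \<open>\<Phi>\<^sub>l(d) = 1 + d + \<dots> + d\<^bsup>l-1\<^esup>\<close>. If \<open>p \<in> \<P>\<close> and \<open>r = R\<^sub>l(p)\<close>,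
  reducing a witness modulo \<open>p\<close> shows \<open>r < p\<close>, so \<open>p\<close> is a prime divisor of \<open>\<Phi>\<^sub>l(r)\<close>
  exceeding \<open>r\<close>. The product of all such primes divides \<open>\<Phi>\<^sub>l(r) < (r + 1)\<^sup>l\<close> while
  each of them is at least \<open>r + 1\<close>, so there are fewer than \<open>l\<close> of them. Summing over
  \<open>r = 1, \<dots>, \<lfloor>M\<rfloor>\<close> bounds the count by \<open>l M\<close>.\<close>

lemma cyclotomic_prime_eq_prod:
  assumes "prime l"
  shows "cyclotomic l = (\<Prod>k\<in>{1..<l}. [:- cis (2 * pi * real k / real l), 1:])"
proof -
  have "{k. 1 \<le> k \<and> k \<le> l \<and> coprime k l} = {1..<l}"
  proof (intro set_eqI iffI)
    fix k assume "k \<in> {k. 1 \<le> k \<and> k \<le> l \<and> coprime k l}"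
    then show "k \<in> {1..<l}" using assms by (cases "k = l") auto
  next
    fix k assume k: "k \<in> {1..<l}"
    then have "\<not> l dvd k" by (auto dest: dvd_imp_le)
    then show "k \<in> {k. 1 \<le> k \<and> k \<le> l \<and> coprime k l}"
      using k prime_imp_coprime[OF assms] by (auto simp: coprime_commute)
  qed
  then show ?thesis unfolding cyclotomic_def by simp
qed

lemma cyclotomic_prime:
  assumes "prime l"
  shows "cyclotomic l = (\<Sum>i<l. monom 1 i)"
proof -
  have l0: "l > 0" using assms prime_gt_0_nat by blast
  let ?root = "\<lambda>k. cis (2 * pi * real k / real l)"
  note cyclo = cyclotomic_prime_eq_prod[OF assms]
  have inj: "inj_on ?root {..<l}"
    using Complex.bij_betw_roots_unity[OF l0] by (rule bij_betw_imp_inj_on)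
  show ?thesis
  proof (rule poly_eqI_degree_lead_coeff[where n = "l - 1" and A = "?root ` {1..<l}"])
    have "degree (cyclotomic l) = l - 1"
      unfolding cyclo by (simp add: degree_prod_eq_sum_degree)
    moreover have "lead_coeff (cyclotomic l) = 1"
      unfolding cyclo by (simp add: lead_coeff_prod)
    moreover have "coeff (\<Sum>i<l. monom (1::complex) i) (l - 1) = 1"
      using l0 by (simp add: coeff_sum coeff_monom)
    ultimately show "degree (cyclotomic l) \<le> l - 1"
      and "coeff (cyclotomic l) (l - 1) = coeff (\<Sum>i<l. monom 1 i) (l - 1)"
      by simp_all
    show "degree (\<Sum>i<l. monom (1::complex) i) \<le> l - 1"
      by (intro degree_sum_le) (auto simp: degree_monom_eq)
    show "card (?root ` {1..<l}) \<ge> l - 1"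
      using inj by (subst card_image) (auto intro: inj_on_subset)
  next
    fix z assume "z \<in> ?root ` {1..<l}"
    then obtain k where k: "k \<in> {1..<l}" "z = ?root k" by blast
    have "z ^ l = 1"
      using Complex.bij_betw_roots_unity[OF l0] k unfolding bij_betw_def by auto
    moreover have "z \<noteq> 1"
      using inj_onD[OF inj, of k 0] k l0 by auto
    ultimately have "(\<Sum>i<l. z ^ i) = 0" by (simp add: geometric_sum)
    moreover have "poly (cyclotomic l) z = 0"
      unfolding cyclo using k by (auto simp: poly_prod)
    ultimately show "poly (cyclotomic l) z = poly (\<Sum>i<l. monom 1 i) z"
      by (simp add: poly_sum poly_monom)
  qed
qed

lemma dvd_cyclo_prime_iff:
  assumes "prime l"
  shows "dvd_cyclo n l d \<longleftrightarrow> n dvd (\<Sum>i<l. d ^ i)"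
proof -
  have "poly (cyclotomic l) (of_nat d) = of_int (int (\<Sum>i<l. d ^ i))"
    by (simp add: cyclotomic_prime[OF assms] poly_sum poly_monom)
  then have "dvd_cyclo n l d \<longleftrightarrow> (\<exists>m. int (\<Sum>i<l. d ^ i) = int n * m)"
    unfolding dvd_cyclo_def by (metis of_int_eq_iff)
  also have "\<dots> \<longleftrightarrow> int n dvd int (\<Sum>i<l. d ^ i)" by (auto simp: dvd_def)
  finally show ?thesis by (simp only: int_dvd_int_iff)
qed

lemma coprime_geom_sum:
  fixes d :: nat
  assumes "l > 0"
  shows "coprime d (\<Sum>i<l. d ^ i)"
proof -
  obtain k where "l = Suc k" using assms not0_implies_Suc by blast
  then have "(\<Sum>i<l. d ^ i) = (\<Sum>i<k. d ^ i) * d + 1"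
    by (simp add: sum.lessThan_Suc_shift sum_distrib_right power_Suc2
        del: sum.lessThan_Suc power_Suc)
  then show ?thesis by (simp only: coprime_iff_gcd_eq_1 gcd_add_mult gcd_1_nat)
qed

lemma dvd_geom_sum_mod_iff:
  fixes d p :: nat
  shows "p dvd (\<Sum>i<l. (d mod p) ^ i) \<longleftrightarrow> p dvd (\<Sum>i<l. d ^ i)"
proof -
  have "(\<Sum>i<l. (d mod p) ^ i) mod p = (\<Sum>i<l. (d mod p) ^ i mod p) mod p"
    by (rule mod_sum_eq[symmetric])
  also have "\<dots> = (\<Sum>i<l. d ^ i mod p) mod p"
    by (simp add: power_mod)
  also have "\<dots> = (\<Sum>i<l. d ^ i) mod p"
    by (rule mod_sum_eq)
  finally show ?thesis by (simp add: dvd_eq_mod_eq_0)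
qed

lemma R_of_Pset_bounds:
  assumes "prime l" and "p \<in> Pset l"
  obtains r where "R l p = enat r" and "1 \<le> r" and "r < p" and "p dvd (\<Sum>i<l. r ^ i)"
proof -
  obtain d where p: "prime p" and "d \<ge> 1" and "dvd_cyclo p l d"
    using assms(2) unfolding Pset_def by blast
  then have dvd_sum: "p dvd (\<Sum>i<l. d ^ i)" using dvd_cyclo_prime_iff[OF assms(1)] by blast
  let ?P = "\<lambda>d. d \<ge> 1 \<and> dvd_cyclo p l d"
  define r where "r = (LEAST d. ?P d)"
  \<comment> \<open>\<open>d mod p\<close> is again a witness; it is nonzero because \<open>p\<close> cannot divide both \<open>d\<close> and \<open>\<Phi>\<^sub>l(d)\<close>.\<close>
  have "\<not> p dvd d"
    using coprime_geom_sum[of l d] dvd_sum p assms(1) prime_gt_0_nat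
    by (metis coprime_common_divisor not_prime_unit)
  then have "?P (d mod p)"
    using dvd_sum dvd_geom_sum_mod_iff dvd_cyclo_prime_iff[OF assms(1)]
    by (simp add: dvd_eq_mod_eq_0 Suc_le_eq)
  then have "?P r" and "r \<le> d mod p"
    unfolding r_def by (rule LeastI, rule Least_le)
  moreover have "d mod p < p" using p prime_gt_0_nat by simp
  moreover have "R l p = enat r" using \<open>?P r\<close> unfolding R_def r_def by auto
  ultimately show thesis
    using that dvd_cyclo_prime_iff[OF assms(1)] by (meson order_le_less_trans)
qed

definition prime_divisors_above :: "nat \<Rightarrow> nat \<Rightarrow> nat set" where
  "prime_divisors_above r n = {p. prime p \<and> p dvd n \<and> r < p}"

lemma finite_prime_divisors_above:
  assumes "n > 0"
  shows "finite (prime_divisors_above r n)"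
proof (rule finite_subset)
  show "prime_divisors_above r n \<subseteq> prime_factors n"
    using assms by (auto simp: prime_divisors_above_def prime_factors_dvd)
qed simp

lemma prod_primes_dvd:
  fixes n :: nat
  assumes "finite P" and "\<And>p. p \<in> P \<Longrightarrow> prime p \<and> p dvd n"
  shows "\<Prod>P dvd n"
  using assms
proof (induction P rule: finite_induct)
  case (insert q P)
  have "coprime (\<Prod>P) q"
    using insert by (intro prod_coprime_left primes_coprime) auto
  then show ?case
    using insert by (metis coprime_commute divides_mult insert_iff prod.insert)
qed simp

lemma power_card_prime_divisors_above_le:
  fixes n r :: nat
  assumes "n > 0"
  shows "(r + 1) ^ card (prime_divisors_above r n) \<le> n"
proof -
  let ?P = "prime_divisors_above r n"
  have fin: "finite ?P" using assms by (rule finite_prime_divisors_above)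
  have "(r + 1) ^ card ?P = (\<Prod>p\<in>?P. r + 1)" by simp
  also have "\<dots> \<le> \<Prod>?P"
    by (rule prod_mono) (auto simp: prime_divisors_above_def)
  also have "\<dots> \<le> n"
    using assms by (intro dvd_imp_le prod_primes_dvd fin) (auto simp: prime_divisors_above_def)
  finally show ?thesis .
qed

lemma geom_sum_pos:
  fixes r :: nat
  assumes "l > 0"
  shows "(\<Sum>i<l. r ^ i) > 0"
proof -
  have "r ^ 0 \<le> (\<Sum>i<l. r ^ i)" using assms by (intro member_le_sum) auto
  then show ?thesis by simp
qed

lemma geom_sum_less_power:
  fixes r :: nat
  assumes "r \<ge> 1"
  shows "(\<Sum>i<n. r ^ i) < (r + 1) ^ n"
proof (induction n)
  case (Suc n)
  have "r ^ n \<le> (r + 1) ^ n" by (rule power_mono) auto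
  also have "\<dots> \<le> r * (r + 1) ^ n" using assms by simp
  finally show ?case using Suc by simp
qed simp

lemma card_prime_divisors_above_geom_sum:
  fixes r l :: nat
  assumes "r \<ge> 1" and "l > 0"
  shows "card (prime_divisors_above r (\<Sum>i<l. r ^ i)) < l"
proof -
  have "(r + 1) ^ card (prime_divisors_above r (\<Sum>i<l. r ^ i)) < (r + 1) ^ l"
    using power_card_prime_divisors_above_le[OF geom_sum_pos[OF assms(2)]]
      geom_sum_less_power[OF assms(1)] by (rule le_less_trans)
  then show ?thesis using assms(1) by (simp add: power_strict_increasing_iff)
qed

theorem proposition3:
  fixes l :: nat and M :: real
  assumes "prime l" and "odd l" and "M \<ge> 0"
  shows "finite {p \<in> Pset l. R l p \<noteq> \<infinity> \<and> real (the_enat (R l p)) \<le> M}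
    \<and> real (card {p \<in> Pset l. R l p \<noteq> \<infinity> \<and> real (the_enat (R l p)) \<le> M}) \<le> 2 * real l * M"
proof -
  let ?A = "{p \<in> Pset l. R l p \<noteq> \<infinity> \<and> real (the_enat (R l p)) \<le> M}"
  define N where "N = nat \<lfloor>M\<rfloor>"
  define B where "B r = prime_divisors_above r (\<Sum>i<l. r ^ i)" for r
  have l0: "l > 0" using assms(1) prime_gt_0_nat by blast
  have cover: "?A \<subseteq> (\<Union>r\<in>{1..N}. B r)"
  proof
    fix p assume p: "p \<in> ?A"
    then obtain r where r: "R l p = enat r" "1 \<le> r" "r < p" "p dvd (\<Sum>i<l. r ^ i)"
      using R_of_Pset_bounds[OF assms(1)] by blast
    have "real r \<le> M" using p r(1) by simp
    then have "r \<le> N" unfolding N_def by (rule le_nat_floor)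
    moreover have "prime p" using p by (simp add: Pset_def)
    ultimately show "p \<in> (\<Union>r\<in>{1..N}. B r)"
      using r unfolding B_def prime_divisors_above_def by auto
  qed
  have B: "finite (B r)" "card (B r) \<le> l" if "r \<in> {1..N}" for r
    using that geom_sum_pos[OF l0, of r] finite_prime_divisors_above
      card_prime_divisors_above_geom_sum[of r l, OF _ l0]
    by (simp_all add: B_def)
  have fin_cover: "finite (\<Union>r\<in>{1..N}. B r)" using B(1) by blast
  have "card ?A \<le> card (\<Union>r\<in>{1..N}. B r)" by (rule card_mono[OF fin_cover cover])
  also have "\<dots> \<le> (\<Sum>r\<in>{1..N}. card (B r))" by (rule card_UN_le) simp
  also have "\<dots> \<le> N * l"
    using B(2) sum_bounded_above[of "{1..N}" "\<lambda>r. card (B r)" l] by simp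
  finally have "real (card ?A) \<le> real N * real l" by (metis of_nat_le_iff of_nat_mult)
  also have "\<dots> \<le> M * real l"
    by (rule mult_right_mono) (use assms(3) in \<open>simp_all add: N_def\<close>)
  also have "\<dots> \<le> 2 * real l * M" using assms(3) by simp
  finally show ?thesis using finite_subset[OF cover fin_cover] by simp
qed

end
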